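(* Let $M,N,Q$ be positive integers with $M\ge 2N$, let $S=\{\vec b\in\mathbb{F}_2^M: H(\vec b)=N\}$, and let $\mathbf{G}\in\mathbb{F}_2^{Q\times M}$ be such that the map $\vec b\mapsto\mathbf{G}\vec b$ (over $\mathbb{F}_2$) is injective on $S$. Then every nonzero $\vec k\in\ker\mathbf{G}$ whose Hamming weight $H(\vec k)$ is even satisfies $H(\vec k)\ge 2N+2$.
   Context: $H(\vec v)$ denotes the Hamming weight (number of nonzero entries) of a binary vector $\vec v$; $\ker\mathbf{G}=\{\vec k\in\mathbb{F}_2^M:\mathbf{G}\vec k=\vec 0\}$. A matrix $\mathbf{G}$ injective on $S$ is called a number-conserving linear encoding of $M$ fermionic modes with $N$ particles. *)

theory Defs
  imports "HOL-Analysis.Analysis" "HOL-Library.Z2"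
begin

text \<open>Vectors over F_2 of length M are modelled as bit ^ 'm with M = CARD('m);
  a Q x M matrix over F_2 is bit ^ 'm ^ 'q.\<close>

definition hamming_weight :: "bit ^ 'n \<Rightarrow> nat" where
  "hamming_weight v = card {i. v $ i \<noteq> 0}"

end

theory Submission
  imports Defs
begin

text \<open>Write a nonzero kernel vector \<open>k\<close> of even weight \<open>2j \<le> 2N\<close> as \<open>b + c\<close> with \<open>H(b) = H(c) = N\<close>:
  split the support of \<open>k\<close> into halves \<open>A\<close>, \<open>B\<close> of size \<open>j\<close> and pad both with the same \<open>N - j\<close>
  positions outside the support, which exist since \<open>M \<ge> 2N\<close>. Then \<open>G b = G c\<close> although
  \<open>b \<noteq> c\<close>, contradicting injectivity on weight-\<open>N\<close> vectors.\<close>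

definition bitvec_of_set :: "'n set \<Rightarrow> bit ^ 'n" where
  "bitvec_of_set S = (\<chi> i. if i \<in> S then 1 else 0)"

lemma hamming_weight_bitvec_of_set [simp]: "hamming_weight (bitvec_of_set S) = card S"
  unfolding hamming_weight_def bitvec_of_set_def by simp

lemma bitvec_of_set_support: "bitvec_of_set {i. v $ i \<noteq> 0} = v"
  unfolding bitvec_of_set_def by (simp add: vec_eq_iff)

lemma bitvec_of_set_add:
  "bitvec_of_set X + bitvec_of_set Y = bitvec_of_set ((X - Y) \<union> (Y - X))"
  unfolding bitvec_of_set_def by (simp add: vec_eq_iff)

lemma bitvec_add_self [simp]: "(v :: bit ^ 'n) + v = 0"
  by (simp add: vec_eq_iff)

lemma even_weight_eq_add_weight:
  fixes k :: "bit ^ 'n"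
  assumes "even (hamming_weight k)" and "hamming_weight k \<le> 2 * N" and "2 * N \<le> CARD('n)"
  obtains b c where "hamming_weight b = N" "hamming_weight c = N" "k = b + c"
proof -
  define K where "K = {i. k $ i \<noteq> 0}"
  obtain j where cardK: "card K = 2 * j"
    using assms(1) unfolding K_def hamming_weight_def by blast
  have "j \<le> N" using assms(2) cardK unfolding K_def hamming_weight_def by linarith
  obtain A where A: "A \<subseteq> K" "card A = j"
    using obtain_subset_with_card_n[of j K] cardK by auto
  define B where "B = K - A"
  have cardB: "card B = j"
    unfolding B_def using A cardK by (simp add: card_Diff_subset finite_subset)
  have "card (UNIV - K) = CARD('n) - 2 * j"
    using cardK by (simp add: card_Diff_subset)
  then have "N - j \<le> card (UNIV - K)" using assms(3) \<open>j \<le> N\<close> by linarith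
  then obtain C where C: "C \<subseteq> UNIV - K" "card C = N - j"
    by (metis obtain_subset_with_card_n)
  have disjoint: "A \<inter> C = {}" "B \<inter> C = {}"
    using A C unfolding B_def by auto
  show thesis
  proof
    show "hamming_weight (bitvec_of_set (A \<union> C)) = N"
      using A C disjoint(1) \<open>j \<le> N\<close> by (simp add: card_Un_disjoint)
    show "hamming_weight (bitvec_of_set (B \<union> C)) = N"
      using cardB C disjoint(2) \<open>j \<le> N\<close> by (simp add: card_Un_disjoint)
    have "(A \<union> C - (B \<union> C)) \<union> (B \<union> C - (A \<union> C)) = K"
      using A C unfolding B_def by auto
    then show "k = bitvec_of_set (A \<union> C) + bitvec_of_set (B \<union> C)"
      by (metis bitvec_of_set_add bitvec_of_set_support K_def)
  qed
qed

theorem lemma1: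
  fixes G :: "bit ^ 'm ^ 'q" and N :: nat
  assumes "N > 0"
    and "CARD('m) \<ge> 2 * N"
    and "inj_on (\<lambda>b. G *v b) {b :: bit ^ 'm. hamming_weight b = N}"
  shows "\<forall>k. G *v k = 0 \<and> k \<noteq> 0 \<and> even (hamming_weight k) \<longrightarrow> hamming_weight k \<ge> 2 * N + 2"
proof (intro allI impI)
  fix k :: "bit ^ 'm"
  assume k: "G *v k = 0 \<and> k \<noteq> 0 \<and> even (hamming_weight k)"
  show "hamming_weight k \<ge> 2 * N + 2"
  proof (rule ccontr)
    assume "\<not> hamming_weight k \<ge> 2 * N + 2"
    with k have "hamming_weight k \<le> 2 * N" by (auto elim!: evenE)
    then obtain b c where bc: "hamming_weight b = N" "hamming_weight c = N" "k = b + c"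
      using even_weight_eq_add_weight k assms(2) by metis
    have "G *v b + G *v c = 0"
      using k bc(3) by (simp add: matrix_vector_right_distrib)
    then have "G *v b = G *v c"
      by (metis add_right_cancel bitvec_add_self)
    then have "b = c" using assms(3) bc(1,2) by (auto dest: inj_onD)
    then show False using k bc(3) by simp
  qed
qed

end
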